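(* Let $\mathcal G$ be a braided stability groupoid and $F\colon U\mathcal G\to\mathrm{Set}$ a functor. Then for all $p,n$ there is an isomorphism $(\Sigma^pF)_n\cong G_n\times_{G_{n-p}}F_{n-p}$. Under these isomorphisms, for a morphism $\eta=hG_{p-q}\in\mathrm{Hom}(q,p)$ (with $h\in G_p$) the corresponding map $(\Sigma^pF)_n\to(\Sigma^qF)_n$ is $[g,x]\mapsto[g(\mathrm{id}_{n-p}\oplus h),F(\mathrm{id}_{n-p}\oplus\iota_{p-q})(x)]$, and this map is independent of the choice of $h$ representing $\eta$.
   Context: Stability groupoid: a monoidal groupoid $(\mathcal G,\oplus,0)$ with objects $(\mathbb N,+,0)$, $G_n=\mathrm{Aut}(n)$, with $\oplus\colon G_m\times G_n\to G_{m+n}$ injective, $G_0$ trivial, $(G_{l+m}\times1)\cap(1\times G_{m+n})=1\times G_m\times1$ in $G_{l+m+n}$; braided: equipped with a braiding $b_{m,n}\in G_{m+n}$. $U\mathcal G$: objects $\mathbb N$, $\mathrm{Hom}(m,n)=G_n/G_{n-m}$ for $m\le n$ ($G_{n-m}\subset G_n$ via $g\mapsto g\oplus\mathrm{id}_m$), empty otherwise, composition $fG_l\circ gG_m=f(\mathrm{id}_l\oplus g)G_{l+m}$, monoidal via $f_1G_{m_1}\oplus f_2G_{m_2}=(f_1\oplus f_2)(\mathrm{id}_{m_1}\oplus b^{-1}_{n_1,m_2}\oplus\mathrm{id}_{n_2})G_{m_1+m_2}$; $0$ initial with $\iota_n\colon 0\to n$. Write $F_n=F(n)$. For an object $X$,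 $\Sigma_X$ is the left adjoint of the functor $F\mapsto F(-\oplus X)$ on functors $U\mathcal G\to\mathrm{Set}$ (left Kan extension along $-\oplus X$); concretely $(\Sigma_XF)(B)=\mathrm{colim}_{(A,\psi\colon A\oplus X\to B)}F(A)$ over the comma category $(-\oplus X\downarrow B)$. A morphism $\eta\colon X\to Y$ induces $\Sigma_YF\to\Sigma_XF$ via the functor $(-\oplus Y\downarrow B)\to(-\oplus X\downarrow B)$, $(A,\psi)\mapsto(A,\psi\circ(\mathrm{id}_A\oplus\eta))$. Write $\Sigma=\Sigma_1$, so $\Sigma^p\cong\Sigma_p$. $G_n\times_{G_{n-p}}F_{n-p}$ is the quotient of $G_n\times F_{n-p}$ by $(gh,x)\sim(g,F(h)x)$ for $h\in G_{n-p}$, where $G_{n-p}\subset G_n$ via $h\mapsto h\oplus\mathrm{id}_p$; $[g,x]$ denotes a class. *)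

theory Defs
  imports "HOL-Algebra.Group" "HOL-Algebra.Coset"
begin

text \<open>A (strict) monoidal groupoid with objects (nat,+,0) is encoded by the automorphism
groups G n (all over a common carrier type) and the monoidal product on morphisms
T m n g h = g \<oplus> h (for g in G m, h in G n), an element of G (m+n).  Group multiplication is composition:
mult (G n) f g = f \<circ> g.\<close>

definition stab_sub :: "(nat \<Rightarrow> 'g monoid) \<Rightarrow> (nat \<Rightarrow> nat \<Rightarrow> 'g \<Rightarrow> 'g \<Rightarrow> 'g) \<Rightarrow> nat \<Rightarrow> nat \<Rightarrow> 'g set" where
  "stab_sub G T n k = (\<lambda>h. T k (n - k) h (one (G (n - k)))) ` carrier (G k)"

definition braided_stability_groupoid ::
  "(nat \<Rightarrow> 'g monoid) \<Rightarrow> (nat \<Rightarrow> nat \<Rightarrow> 'g \<Rightarrow> 'g \<Rightarrow> 'g) \<Rightarrow> (nat \<Rightarrow> nat \<Rightarrow> 'g) \<Rightarrow> bool" where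
  "braided_stability_groupoid G T B \<longleftrightarrow>
     (\<forall>n. group (G n)) \<and>
     \<comment> \<open>the monoidal product is a functor G_m x G_n -> G_(m+n)\<close>
     (\<forall>m n g h. g \<in> carrier (G m) \<longrightarrow> h \<in> carrier (G n) \<longrightarrow> T m n g h \<in> carrier (G (m + n))) \<and>
     (\<forall>m n g g' h h'. g \<in> carrier (G m) \<longrightarrow> g' \<in> carrier (G m) \<longrightarrow>
         h \<in> carrier (G n) \<longrightarrow> h' \<in> carrier (G n) \<longrightarrow>
         T m n (mult (G m) g g') (mult (G n) h h') = mult (G (m + n)) (T m n g h) (T m n g' h')) \<and>
     \<comment> \<open>strict associativity and unit\<close>
     (\<forall>l m n a b c. a \<in> carrier (G l) \<longrightarrow> b \<in> carrier (G m) \<longrightarrow> c \<in> carrier (G n) \<longrightarrow>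
         T (l + m) n (T l m a b) c = T l (m + n) a (T m n b c)) \<and>
     (\<forall>n g. g \<in> carrier (G n) \<longrightarrow> T 0 n (one (G 0)) g = g \<and> T n 0 g (one (G 0)) = g) \<and>
     \<comment> \<open>stability groupoid axioms\<close>
     (\<forall>m n. inj_on (\<lambda>(g, h). T m n g h) (carrier (G m) \<times> carrier (G n))) \<and>
     carrier (G 0) = {one (G 0)} \<and>
     (\<forall>l m n.
        (\<lambda>g. T (l + m) n g (one (G n))) ` carrier (G (l + m)) \<inter>
        (\<lambda>g. T l (m + n) (one (G l)) g) ` carrier (G (m + n))
        = (\<lambda>g. T l (m + n) (one (G l)) (T m n g (one (G n)))) ` carrier (G m)) \<and>
     \<comment> \<open>braiding: b_(m,n) : m+n -> n+m, natural, hexagon identities\<close>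
     (\<forall>m n. B m n \<in> carrier (G (m + n))) \<and>
     (\<forall>m n g h. g \<in> carrier (G m) \<longrightarrow> h \<in> carrier (G n) \<longrightarrow>
         mult (G (m + n)) (B m n) (T m n g h) = mult (G (m + n)) (T n m h g) (B m n)) \<and>
     (\<forall>l m n. B l (m + n) =
         mult (G (l + m + n)) (T m (l + n) (one (G m)) (B l n)) (T (l + m) n (B l m) (one (G n)))) \<and>
     (\<forall>l m n. B (l + m) n =
         mult (G (l + m + n)) (T (l + n) m (B l n) (one (G m))) (T l (m + n) (one (G l)) (B m n)))"

section \<open>The category U G\<close>

text \<open>Hom(m,n) = G_n / G_(n-m), morphisms are left cosets.\<close>
definition UHom :: "(nat \<Rightarrow> 'g monoid) \<Rightarrow> (nat \<Rightarrow> nat \<Rightarrow> 'g \<Rightarrow> 'g \<Rightarrow> 'g) \<Rightarrow> nat \<Rightarrow> nat \<Rightarrow> 'g set set" where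
  "UHom G T m n = (if m \<le> n then {l_coset (G n) f (stab_sub G T n (n - m)) | f. f \<in> carrier (G n)} else {})"

definition urep :: "'g set \<Rightarrow> 'g" where
  "urep \<phi> = (SOME f. f \<in> \<phi>)"

text \<open>composition of psi : k -> n with phi : m -> k:
  f G_l o g G_m' = f (id_l + g) G_(l+m')\<close>
definition ucomp :: "(nat \<Rightarrow> 'g monoid) \<Rightarrow> (nat \<Rightarrow> nat \<Rightarrow> 'g \<Rightarrow> 'g \<Rightarrow> 'g) \<Rightarrow> nat \<Rightarrow> nat \<Rightarrow> nat \<Rightarrow> 'g set \<Rightarrow> 'g set \<Rightarrow> 'g set" where
  "ucomp G T n k m \<psi> \<phi> =
     l_coset (G n) (mult (G n) (urep \<psi>) (T (n - k) k (one (G (n - k))) (urep \<phi>))) (stab_sub G T n (n - m))"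

definition uid :: "(nat \<Rightarrow> 'g monoid) \<Rightarrow> (nat \<Rightarrow> nat \<Rightarrow> 'g \<Rightarrow> 'g \<Rightarrow> 'g) \<Rightarrow> nat \<Rightarrow> 'g set" where
  "uid G T n = l_coset (G n) (one (G n)) (stab_sub G T n 0)"

definition uiota :: "(nat \<Rightarrow> 'g monoid) \<Rightarrow> (nat \<Rightarrow> nat \<Rightarrow> 'g \<Rightarrow> 'g \<Rightarrow> 'g) \<Rightarrow> nat \<Rightarrow> 'g set" where
  "uiota G T n = l_coset (G n) (one (G n)) (stab_sub G T n n)"

text \<open>monoidal product of phi1 : a1 -> c1 and phi2 : a2 -> c2 (n_i = a_i, m_i = c_i - a_i):
  f1 G_m1 + f2 G_m2 = (f1 + f2)(id_m1 + b^-1_(n1,m2) + id_n2) G_(m1+m2)\<close>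
definition utens :: "(nat \<Rightarrow> 'g monoid) \<Rightarrow> (nat \<Rightarrow> nat \<Rightarrow> 'g \<Rightarrow> 'g \<Rightarrow> 'g) \<Rightarrow> (nat \<Rightarrow> nat \<Rightarrow> 'g) \<Rightarrow>
    nat \<Rightarrow> nat \<Rightarrow> nat \<Rightarrow> nat \<Rightarrow> 'g set \<Rightarrow> 'g set \<Rightarrow> 'g set" where
  "utens G T B a1 c1 a2 c2 \<phi>1 \<phi>2 =
     (let m1 = c1 - a1; m2 = c2 - a2 in
      l_coset (G (c1 + c2))
        (mult (G (c1 + c2)) (T c1 c2 (urep \<phi>1) (urep \<phi>2))
           (T m1 (a1 + m2 + a2) (one (G m1)) (T (a1 + m2) a2 (m_inv (G (a1 + m2)) (B a1 m2)) (one (G a2)))))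
        (stab_sub G T (c1 + c2) (m1 + m2)))"

definition UG_functor :: "(nat \<Rightarrow> 'g monoid) \<Rightarrow> (nat \<Rightarrow> nat \<Rightarrow> 'g \<Rightarrow> 'g \<Rightarrow> 'g) \<Rightarrow>
    (nat \<Rightarrow> 'x set) \<Rightarrow> (nat \<Rightarrow> nat \<Rightarrow> 'g set \<Rightarrow> 'x \<Rightarrow> 'x) \<Rightarrow> bool" where
  "UG_functor G T Fo Fm \<longleftrightarrow>
     (\<forall>m n \<phi> x. \<phi> \<in> UHom G T m n \<longrightarrow> x \<in> Fo m \<longrightarrow> Fm m n \<phi> x \<in> Fo n) \<and>
     (\<forall>n x. x \<in> Fo n \<longrightarrow> Fm n n (uid G T n) x = x) \<and>
     (\<forall>m k n \<phi> \<psi> x. \<phi> \<in> UHom G T m k \<longrightarrow> \<psi> \<in> UHom G T k n \<longrightarrow> x \<in> Fo m \<longrightarrow>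
        Fm m n (ucomp G T n k m \<psi> \<phi>) x = Fm k n \<psi> (Fm m k \<phi> x))"

section \<open>Sigma_X F as a colimit over the comma category (- + X | Bo)\<close>

definition Sig_tot :: "(nat \<Rightarrow> 'g monoid) \<Rightarrow> (nat \<Rightarrow> nat \<Rightarrow> 'g \<Rightarrow> 'g \<Rightarrow> 'g) \<Rightarrow> (nat \<Rightarrow> 'x set) \<Rightarrow>
    nat \<Rightarrow> nat \<Rightarrow> (nat \<times> 'g set \<times> 'x) set" where
  "Sig_tot G T Fo X Bo = {(A, \<psi>, x). \<psi> \<in> UHom G T (A + X) Bo \<and> x \<in> Fo A}"

definition Sig_rel :: "(nat \<Rightarrow> 'g monoid) \<Rightarrow> (nat \<Rightarrow> nat \<Rightarrow> 'g \<Rightarrow> 'g \<Rightarrow> 'g) \<Rightarrow> (nat \<Rightarrow> nat \<Rightarrow> 'g) \<Rightarrow>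
    (nat \<Rightarrow> 'x set) \<Rightarrow> (nat \<Rightarrow> nat \<Rightarrow> 'g set \<Rightarrow> 'x \<Rightarrow> 'x) \<Rightarrow> nat \<Rightarrow> nat \<Rightarrow>
    ((nat \<times> 'g set \<times> 'x) \<times> (nat \<times> 'g set \<times> 'x)) set" where
  "Sig_rel G T B Fo Fm X Bo =
     {((A, \<psi>, x), (A', \<psi>', x')).
        (A, \<psi>, x) \<in> Sig_tot G T Fo X Bo \<and> (A', \<psi>', x') \<in> Sig_tot G T Fo X Bo \<and>
        (\<exists>\<alpha> \<in> UHom G T A A'.
           \<psi> = ucomp G T Bo (A' + X) (A + X) \<psi>' (utens G T B A A' X X \<alpha> (uid G T X)) \<and>
           x' = Fm A A' \<alpha> x)}"

definition Sig_eq :: "(nat \<Rightarrow> 'g monoid) \<Rightarrow> (nat \<Rightarrow> nat \<Rightarrow> 'g \<Rightarrow> 'g \<Rightarrow> 'g) \<Rightarrow> (nat \<Rightarrow> nat \<Rightarrow> 'g) \<Rightarrow>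
    (nat \<Rightarrow> 'x set) \<Rightarrow> (nat \<Rightarrow> nat \<Rightarrow> 'g set \<Rightarrow> 'x \<Rightarrow> 'x) \<Rightarrow> nat \<Rightarrow> nat \<Rightarrow>
    ((nat \<times> 'g set \<times> 'x) \<times> (nat \<times> 'g set \<times> 'x)) set" where
  "Sig_eq G T B Fo Fm X Bo = (Sig_rel G T B Fo Fm X Bo \<union> (Sig_rel G T B Fo Fm X Bo)\<inverse>)\<^sup>*"

definition Sig :: "(nat \<Rightarrow> 'g monoid) \<Rightarrow> (nat \<Rightarrow> nat \<Rightarrow> 'g \<Rightarrow> 'g \<Rightarrow> 'g) \<Rightarrow> (nat \<Rightarrow> nat \<Rightarrow> 'g) \<Rightarrow>
    (nat \<Rightarrow> 'x set) \<Rightarrow> (nat \<Rightarrow> nat \<Rightarrow> 'g set \<Rightarrow> 'x \<Rightarrow> 'x) \<Rightarrow> nat \<Rightarrow> nat \<Rightarrow> (nat \<times> 'g set \<times> 'x) set set" where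
  "Sig G T B Fo Fm X Bo = Sig_tot G T Fo X Bo // Sig_eq G T B Fo Fm X Bo"

definition Sig_map :: "(nat \<Rightarrow> 'g monoid) \<Rightarrow> (nat \<Rightarrow> nat \<Rightarrow> 'g \<Rightarrow> 'g \<Rightarrow> 'g) \<Rightarrow> (nat \<Rightarrow> nat \<Rightarrow> 'g) \<Rightarrow>
    (nat \<Rightarrow> 'x set) \<Rightarrow> (nat \<Rightarrow> nat \<Rightarrow> 'g set \<Rightarrow> 'x \<Rightarrow> 'x) \<Rightarrow> nat \<Rightarrow> nat \<Rightarrow> 'g set \<Rightarrow> nat \<Rightarrow>
    (nat \<times> 'g set \<times> 'x) set \<Rightarrow> (nat \<times> 'g set \<times> 'x) set" where
  "Sig_map G T B Fo Fm X Y \<eta> Bo c =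
     (case (SOME t. t \<in> c) of (A, \<psi>, x) \<Rightarrow>
        Sig_eq G T B Fo Fm X Bo ``
          {(A, ucomp G T Bo (A + Y) (A + X) \<psi> (utens G T B A A X Y (uid G T A) \<eta>), x)})"

section \<open>The balanced product G_n x_(G_k) F_k\<close>

definition bal_rel :: "(nat \<Rightarrow> 'g monoid) \<Rightarrow> (nat \<Rightarrow> nat \<Rightarrow> 'g \<Rightarrow> 'g \<Rightarrow> 'g) \<Rightarrow>
    (nat \<Rightarrow> 'x set) \<Rightarrow> (nat \<Rightarrow> nat \<Rightarrow> 'g set \<Rightarrow> 'x \<Rightarrow> 'x) \<Rightarrow> nat \<Rightarrow> nat \<Rightarrow> (('g \<times> 'x) \<times> ('g \<times> 'x)) set" where
  "bal_rel G T Fo Fm n k =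
     {((g1, x1), (g2, x2)). g2 \<in> carrier (G n) \<and> x1 \<in> Fo k \<and>
        (\<exists>h \<in> carrier (G k). g1 = mult (G n) g2 (T k (n - k) h (one (G (n - k)))) \<and>
            x2 = Fm k k (l_coset (G k) h (stab_sub G T k 0)) x1)}"

definition bal_eq :: "(nat \<Rightarrow> 'g monoid) \<Rightarrow> (nat \<Rightarrow> nat \<Rightarrow> 'g \<Rightarrow> 'g \<Rightarrow> 'g) \<Rightarrow>
    (nat \<Rightarrow> 'x set) \<Rightarrow> (nat \<Rightarrow> nat \<Rightarrow> 'g set \<Rightarrow> 'x \<Rightarrow> 'x) \<Rightarrow> nat \<Rightarrow> nat \<Rightarrow> (('g \<times> 'x) \<times> ('g \<times> 'x)) set" where
  "bal_eq G T Fo Fm n k = (bal_rel G T Fo Fm n k \<union> (bal_rel G T Fo Fm n k)\<inverse>)\<^sup>*"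

definition Bal :: "(nat \<Rightarrow> 'g monoid) \<Rightarrow> (nat \<Rightarrow> nat \<Rightarrow> 'g \<Rightarrow> 'g \<Rightarrow> 'g) \<Rightarrow>
    (nat \<Rightarrow> 'x set) \<Rightarrow> (nat \<Rightarrow> nat \<Rightarrow> 'g set \<Rightarrow> 'x \<Rightarrow> 'x) \<Rightarrow> nat \<Rightarrow> nat \<Rightarrow> ('g \<times> 'x) set set" where
  "Bal G T Fo Fm n k = (carrier (G n) \<times> Fo k) // bal_eq G T Fo Fm n k"

definition bcls :: "(nat \<Rightarrow> 'g monoid) \<Rightarrow> (nat \<Rightarrow> nat \<Rightarrow> 'g \<Rightarrow> 'g \<Rightarrow> 'g) \<Rightarrow>
    (nat \<Rightarrow> 'x set) \<Rightarrow> (nat \<Rightarrow> nat \<Rightarrow> 'g set \<Rightarrow> 'x \<Rightarrow> 'x) \<Rightarrow> nat \<Rightarrow> nat \<Rightarrow> 'g \<Rightarrow> 'x \<Rightarrow> ('g \<times> 'x) set" where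
  "bcls G T Fo Fm n k g x = bal_eq G T Fo Fm n k `` {(g, x)}"

end

(*
  A representative (A, psi, x) of the colimit (Sigma^p F)_n, with psi : A + p -> n
  and x in F_A, is identified along iota \<oplus> id_p with (n - p, psi, F(iota) x), so every class has a
  representative (n - p, g, x) with g in G_n and x in F_(n-p).  Two such representatives are
  identified exactly when they differ by an element of G_(n-p), acting on g from the right and
  on x through F; this is the relation defining G_n x_(G_(n-p)) F_(n-p).  For the naturality
  statement one follows a representative through precomposition with id \<oplus> eta: the hexagon
  identity splits the braid in id_(n-p) \<oplus> iota_(p-q) into a factor that is absorbed by the
  stabiliser and the factor that appears in id_A \<oplus> eta.
*)

theory Submission
  imports Defs "HOL-Algebra.Left_Coset"
begin

lemma equiv_rtrancl_symcl: "equiv UNIV ((r \<union> r\<inverse>)\<^sup>*)"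
  by (simp add: equiv_def refl_rtrancl sym_rtrancl[OF sym_Un_converse] trans_rtrancl)

lemma rtrancl_symcl_map:
  assumes "(a, b) \<in> (r \<union> r\<inverse>)\<^sup>*" and "\<And>x y. (x, y) \<in> r \<Longrightarrow> (f x, f y) \<in> s"
  shows "(f a, f b) \<in> (s \<union> s\<inverse>)\<^sup>*"
  using assms(1)
proof (induction rule: rtrancl_induct)
  case (step b c)
  then have "(f b, f c) \<in> s \<union> s\<inverse>" using assms(2) by blast
  with step.IH show ?case by (rule rtrancl_into_rtrancl)
qed simp

lemma rtrancl_symcl_closed:
  assumes "(a, b) \<in> (r \<union> r\<inverse>)\<^sup>*" "r \<subseteq> X \<times> X" "a \<in> X"
  shows "b \<in> X"
  using assms(1) by induction (use assms(2,3) in auto)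

lemma respects_rtrancl_symcl:
  assumes "\<And>a b. (a, b) \<in> r \<Longrightarrow> f a = f b"
  shows "f respects (r \<union> r\<inverse>)\<^sup>*"
proof (rule congruentI)
  fix a b assume "(a, b) \<in> (r \<union> r\<inverse>)\<^sup>*"
  then have "(f a, f b) \<in> (Id \<union> Id\<inverse>)\<^sup>*"
    by (rule rtrancl_symcl_map) (simp add: assms)
  then show "f a = f b" by simp
qed

lemma respects_some_in_class:
  assumes "equiv UNIV E" "f respects E"
  shows "f (SOME t. t \<in> E``{a}) = f a"
proof -
  have "(SOME t. t \<in> E``{a}) \<in> E``{a}" using equiv_class_self[OF assms(1)] by (rule someI) simp
  then show ?thesis using congruentD[OF assms(2)] by (metis Image_singleton_iff)
qed

lemma bij_betw_quotients:
  assumes E: "equiv UNIV E" and D: "equiv UNIV D"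
    and f: "f respects E"
    and g: "\<And>y. y \<in> Y \<Longrightarrow> g y \<in> X" "\<And>y y'. (y, y') \<in> D \<Longrightarrow> (g y, g y') \<in> E"
    and fg: "\<And>y. y \<in> Y \<Longrightarrow> f (g y) = D``{y}"
    and gf: "\<And>t. t \<in> X \<Longrightarrow> \<exists>y\<in>Y. (t, g y) \<in> E"
  shows "bij_betw (\<lambda>c. f (SOME t. t \<in> c)) (X//E) (Y//D)"
proof -
  have normal_form: "\<exists>y\<in>Y. c = E``{g y} \<and> f (SOME t. t \<in> c) = D``{y}" if "c \<in> X//E" for c
  proof -
    obtain t where t: "t \<in> X" "c = E``{t}" using \<open>c \<in> X//E\<close> by (rule quotientE)
    then obtain y where y: "y \<in> Y" "(t, g y) \<in> E" using gf by blast
    then have "c = E``{g y}" using t(2) equiv_class_eq[OF E] by simp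
    then show ?thesis using y(1) fg respects_some_in_class[OF E f] by metis
  qed
  show ?thesis
  proof (rule bij_betw_imageI)
    show "inj_on (\<lambda>c. f (SOME t. t \<in> c)) (X//E)"
    proof (rule inj_onI)
      fix c c' assume "c \<in> X//E" "c' \<in> X//E" and eq: "f (SOME t. t \<in> c) = f (SOME t. t \<in> c')"
      then obtain y y' where "c = E``{g y}" "c' = E``{g y'}" "D``{y} = D``{y'}"
        using normal_form by metis
      then show "c = c'" using g(2) eq_equiv_class[OF _ D] equiv_class_eq[OF E] by blast
    qed
    show "(\<lambda>c. f (SOME t. t \<in> c)) ` (X//E) = Y//D"
    proof
      show "(\<lambda>c. f (SOME t. t \<in> c)) ` (X//E) \<subseteq> Y//D"
        using normal_form by (fastforce intro: quotientI)
      show "Y//D \<subseteq> (\<lambda>c. f (SOME t. t \<in> c)) ` (X//E)"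
      proof
        fix d assume "d \<in> Y//D"
        then obtain y where y: "y \<in> Y" "d = D``{y}" by (rule quotientE)
        then have "d = f (SOME t. t \<in> E``{g y})" using fg respects_some_in_class[OF E f] by simp
        then show "d \<in> (\<lambda>c. f (SOME t. t \<in> c)) ` (X//E)" using g(1) y(1) by (blast intro: quotientI)
      qed
    qed
  qed
qed

lemma (in group) l_coset_mult_absorb:
  "subgroup H G \<Longrightarrow> a \<in> carrier G \<Longrightarrow> t \<in> H \<Longrightarrow> (a \<otimes> t) <# H = a <# H"
  by (metis l_repr_independence l_coset_def UN_iff singletonI)

lemma (in group) urep_l_coset:
  "subgroup H G \<Longrightarrow> a \<in> carrier G \<Longrightarrow> urep (a <# H) \<in> a <# H"
  unfolding urep_def by (rule someI, rule lcos_self)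

lemma (in group) l_coset_trivial: "a \<in> carrier G \<Longrightarrow> a <# {\<one>} = {a}"
  by (simp add: l_coset_def)

lemma (in group) inv_intertwines:
  assumes "b \<in> carrier G" "x \<in> carrier G" "y \<in> carrier G" "b \<otimes> x = y \<otimes> b"
  shows "x \<otimes> inv b = inv b \<otimes> y"
  using assms by (metis inv_solve_left inv_solve_right m_assoc m_closed inv_closed)

locale braided_stability =
  fixes G :: "nat \<Rightarrow> 'g monoid" and T :: "nat \<Rightarrow> nat \<Rightarrow> 'g \<Rightarrow> 'g \<Rightarrow> 'g" and B :: "nat \<Rightarrow> nat \<Rightarrow> 'g"
  assumes group_G: "group (G n)"
    and T_closed: "g \<in> carrier (G m) \<Longrightarrow> h \<in> carrier (G k) \<Longrightarrow> T m k g h \<in> carrier (G (m + k))"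
    and T_mult: "g \<in> carrier (G m) \<Longrightarrow> g' \<in> carrier (G m) \<Longrightarrow> h \<in> carrier (G k) \<Longrightarrow> h' \<in> carrier (G k) \<Longrightarrow>
      T m k (g \<otimes>\<^bsub>G m\<^esub> g') (h \<otimes>\<^bsub>G k\<^esub> h') = T m k g h \<otimes>\<^bsub>G (m + k)\<^esub> T m k g' h'"
    and T_assoc: "a \<in> carrier (G l) \<Longrightarrow> b \<in> carrier (G m) \<Longrightarrow> c \<in> carrier (G k) \<Longrightarrow>
      T (l + m) k (T l m a b) c = T l (m + k) a (T m k b c)"
    and T_unit_left: "g \<in> carrier (G k) \<Longrightarrow> T 0 k \<one>\<^bsub>G 0\<^esub> g = g"
    and T_unit_right: "g \<in> carrier (G k) \<Longrightarrow> T k 0 g \<one>\<^bsub>G 0\<^esub> = g"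
    and carrier_G0: "carrier (G 0) = {\<one>\<^bsub>G 0\<^esub>}"
    and B_closed: "B m k \<in> carrier (G (m + k))"
    and B_natural: "g \<in> carrier (G m) \<Longrightarrow> h \<in> carrier (G k) \<Longrightarrow>
      B m k \<otimes>\<^bsub>G (m + k)\<^esub> T m k g h = T k m h g \<otimes>\<^bsub>G (m + k)\<^esub> B m k"
    and B_hexagon_left:
      "B l (m + k) = T m (l + k) \<one>\<^bsub>G m\<^esub> (B l k) \<otimes>\<^bsub>G (l + m + k)\<^esub> T (l + m) k (B l m) \<one>\<^bsub>G k\<^esub>"
    and B_hexagon_right:
      "B (l + m) k = T (l + k) m (B l k) \<one>\<^bsub>G m\<^esub> \<otimes>\<^bsub>G (l + m + k)\<^esub> T l (m + k) \<one>\<^bsub>G l\<^esub> (B m k)"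

lemma braided_stability_groupoid_imp_braided_stability:
  "braided_stability_groupoid G T B \<Longrightarrow> braided_stability G T B"
  unfolding braided_stability_groupoid_def braided_stability_def by (elim conjE) (intro conjI allI impI; metis)

context braided_stability
begin

abbreviation "e n \<equiv> \<one>\<^bsub>G n\<^esub>"

abbreviation "S n k \<equiv> stab_sub G T n k"

lemma one_closed: "e n \<in> carrier (G n)"
  by (simp add: group.is_monoid[OF group_G] monoid.one_closed)

lemma T_one_one: "T m k (e m) (e k) = e (m + k)"
proof -
  interpret Gm: group "G m" by (rule group_G)
  interpret Gk: group "G k" by (rule group_G)
  interpret Gmk: group "G (m + k)" by (rule group_G)
  have "T m k (e m) (e k) \<otimes>\<^bsub>G (m + k)\<^esub> T m k (e m) (e k) = T m k (e m) (e k)"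
    using T_mult[of "e m" m "e m" "e k" k "e k"] by simp
  then show ?thesis using T_closed[of "e m" m "e k" k] by (metis Gmk.l_cancel_one' Gm.one_closed Gk.one_closed Gmk.r_one)
qed

lemma B_right_zero: "B l 0 = e l"
proof -
  interpret group "G l" by (rule group_G)
  have "B l 0 = B l 0 \<otimes>\<^bsub>G l\<^esub> B l 0"
    using B_hexagon_left[of l 0 0] B_closed[of l 0] by (simp add: T_unit_left T_unit_right)
  then show ?thesis using B_closed[of l 0] by (metis add_0_right l_cancel_one' r_one)
qed

lemma inv_B_closed: "m + k = N \<Longrightarrow> inv\<^bsub>G N\<^esub> B m k \<in> carrier (G N)"
  using B_closed[of m k] by (simp add: group.inv_closed[OF group_G])

text \<open>\<open>embL n j t = t \<oplus> id\<^sub>n\<^sub>-\<^sub>j\<close> is the inclusion \<open>G\<^sub>j \<subseteq> G\<^sub>n\<close> of the paper, whose image is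
  \<open>stab_sub G T n j\<close>; \<open>embR n i g = id\<^sub>n\<^sub>-\<^sub>i \<oplus> g\<close> is the complementary one.\<close>

definition embL :: "nat \<Rightarrow> nat \<Rightarrow> 'g \<Rightarrow> 'g" where
  "embL n j t = T j (n - j) t (e (n - j))"

definition embR :: "nat \<Rightarrow> nat \<Rightarrow> 'g \<Rightarrow> 'g" where
  "embR n i g = T (n - i) i (e (n - i)) g"

lemma group_hom_embL: "j \<le> n \<Longrightarrow> group_hom (G j) (G n) (embL n j)"
  unfolding group_hom_def group_hom_axioms_def hom_def embL_def
  using T_closed[of _ j "e (n - j)" "n - j"] T_mult[of _ j _ "e (n - j)" "n - j" "e (n - j)"]
  by (auto simp: group_G one_closed group.is_monoid monoid.l_one)

lemma group_hom_embR: "i \<le> n \<Longrightarrow> group_hom (G i) (G n) (embR n i)"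
  unfolding group_hom_def group_hom_axioms_def hom_def embR_def
  using T_closed[of "e (n - i)" "n - i" _ i] T_mult[of "e (n - i)" "n - i" "e (n - i)" _ i]
  by (auto simp: group_G one_closed group.is_monoid monoid.l_one)

lemmas embL_closed = group_hom.hom_closed[OF group_hom_embL]
lemmas embL_mult = group_hom.hom_mult[OF group_hom_embL]
lemmas embL_inv = group_hom.hom_inv[OF group_hom_embL]
lemmas embR_closed = group_hom.hom_closed[OF group_hom_embR]
lemmas embR_mult = group_hom.hom_mult[OF group_hom_embR]
lemmas embR_inv = group_hom.hom_inv[OF group_hom_embR]
lemmas embL_one = group_hom.hom_one[OF group_hom_embL]
lemmas embR_one = group_hom.hom_one[OF group_hom_embR]

lemma embR_self: "t \<in> carrier (G n) \<Longrightarrow> embR n n t = t"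
  unfolding embR_def by (simp add: T_unit_left)

lemma embL_embL:
  assumes "j' \<le> j" "j \<le> n" "t \<in> carrier (G j')"
  shows "embL n j (embL j j' t) = embL n j' t"
proof -
  have "embL n j (embL j j' t) = T j' (j - j' + (n - j)) t (T (j - j') (n - j) (e (j - j')) (e (n - j)))"
    unfolding embL_def using T_assoc[of t j' "e (j - j')" "j - j'" "e (n - j)" "n - j"] assms
    by (simp add: one_closed)
  then show ?thesis unfolding embL_def T_one_one using assms by simp
qed

lemma embR_embR:
  assumes "i' \<le> i" "i \<le> n" "t \<in> carrier (G i')"
  shows "embR n i (embR i i' t) = embR n i' t"
proof -
  have "embR n i (embR i i' t) = T (n - i + (i - i')) i' (T (n - i) (i - i') (e (n - i)) (e (i - i'))) t"
    unfolding embR_def using T_assoc[of "e (n - i)" "n - i" "e (i - i')" "i - i'" t i'] assms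
    by (simp add: one_closed)
  then show ?thesis unfolding embR_def T_one_one using assms by simp
qed

lemma embR_embL:
  assumes "j \<le> i" "i \<le> n" "t \<in> carrier (G j)"
  shows "embR n i (embL i j t) = embL n (n - i + j) (embR (n - i + j) j t)"
proof -
  have "embR n i (embL i j t) = T (n - i) (j + (i - j)) (e (n - i)) (T j (i - j) t (e (i - j)))"
    unfolding embR_def embL_def using assms by simp
  also have "\<dots> = T (n - i + j) (i - j) (T (n - i) j (e (n - i)) t) (e (i - j))"
    using T_assoc[of "e (n - i)" "n - i" t j "e (i - j)" "i - j"] assms by (simp add: one_closed)
  finally show ?thesis unfolding embR_def embL_def using assms by simp
qed

lemma embR_embL_commute:
  assumes "i + j \<le> n" "g \<in> carrier (G i)" "t \<in> carrier (G j)"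
  shows "embR n i g \<otimes>\<^bsub>G n\<^esub> embL n j t = embL n j t \<otimes>\<^bsub>G n\<^esub> embR n i g"
proof -
  interpret Gi: group "G i" by (rule group_G)
  interpret Gni: group "G (n - i)" by (rule group_G)
  define t' where "t' = embL (n - i) j t"
  have t': "t' \<in> carrier (G (n - i))" unfolding t'_def using assms by (simp add: embL_closed)
  have L: "embL n j t = T (n - i) i t' (e i)"
    using embL_embL[of j "n - i" n t] assms unfolding t'_def by (simp add: embL_def)
  have "embR n i g \<otimes>\<^bsub>G n\<^esub> embL n j t = T (n - i) i (e (n - i) \<otimes>\<^bsub>G (n - i)\<^esub> t') (g \<otimes>\<^bsub>G i\<^esub> e i)"
    using T_mult[of "e (n - i)" "n - i" t' g i "e i"] t' assms(1,2) by (simp add: embR_def L)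
  also have "\<dots> = T (n - i) i (t' \<otimes>\<^bsub>G (n - i)\<^esub> e (n - i)) (e i \<otimes>\<^bsub>G i\<^esub> g)"
    using t' assms(2) by simp
  also have "\<dots> = embL n j t \<otimes>\<^bsub>G n\<^esub> embR n i g"
    using T_mult[of t' "n - i" "e (n - i)" "e i" i g] t' assms(1,2) by (simp add: embR_def L)
  finally show ?thesis .
qed

lemma stab_sub_eq: "S n j = embL n j ` carrier (G j)"
  unfolding stab_sub_def embL_def by simp

lemma subgroup_stab_sub: "j \<le> n \<Longrightarrow> subgroup (S n j) (G n)"
  unfolding stab_sub_eq by (rule group_hom.img_is_subgroup[OF group_hom_embL])

lemma embL_in_stab_sub: "t \<in> carrier (G j) \<Longrightarrow> embL n j t \<in> S n j"
  unfolding stab_sub_eq by (rule imageI)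

lemma stab_sub_closed: "j \<le> n \<Longrightarrow> s \<in> S n j \<Longrightarrow> s \<in> carrier (G n)"
  by (rule subgroup.mem_carrier[OF subgroup_stab_sub])

lemma stab_sub_zero: "S n 0 = {e n}"
  unfolding stab_sub_eq carrier_G0 embL_def by (simp add: T_one_one)

lemma stab_sub_mono:
  assumes "j' \<le> j" "j \<le> n"
  shows "S n j' \<subseteq> S n j"
proof
  fix s assume "s \<in> S n j'"
  then obtain t where "t \<in> carrier (G j')" "s = embL n j' t" unfolding stab_sub_eq by blast
  with assms show "s \<in> S n j"
    by (metis embL_embL embL_closed embL_in_stab_sub order_trans)
qed

lemma embR_stab_sub: "j \<le> i \<Longrightarrow> i \<le> n \<Longrightarrow> s \<in> S i j \<Longrightarrow> embR n i s \<in> S n (n - i + j)"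
  unfolding stab_sub_eq by (auto simp: embR_embL embL_closed embR_closed)

lemma l_coset_stab_sub_zero: "a \<in> carrier (G n) \<Longrightarrow> a <#\<^bsub>G n\<^esub> S n 0 = {a}"
  unfolding stab_sub_zero by (rule group.l_coset_trivial[OF group_G])

lemma urep_l_coset_stab_sub:
  assumes "j \<le> n" "f \<in> carrier (G n)"
  obtains s where "s \<in> carrier (G j)" "urep (f <#\<^bsub>G n\<^esub> S n j) = f \<otimes>\<^bsub>G n\<^esub> embL n j s"
  using group.urep_l_coset[OF group_G subgroup_stab_sub[OF assms(1)] assms(2)]
  unfolding l_coset_def stab_sub_eq by blast

lemma l_coset_embL_absorb:
  "j \<le> n \<Longrightarrow> f \<in> carrier (G n) \<Longrightarrow> s \<in> carrier (G j) \<Longrightarrow>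
   (f \<otimes>\<^bsub>G n\<^esub> embL n j s) <#\<^bsub>G n\<^esub> S n j = f <#\<^bsub>G n\<^esub> S n j"
  by (intro group.l_coset_mult_absorb[OF group_G] subgroup_stab_sub embL_in_stab_sub)

lemma UHom_iff: "\<psi> \<in> UHom G T m n \<longleftrightarrow> m \<le> n \<and> (\<exists>f\<in>carrier (G n). \<psi> = f <#\<^bsub>G n\<^esub> S n (n - m))"
  unfolding UHom_def by auto

lemma l_coset_in_UHom: "m \<le> n \<Longrightarrow> f \<in> carrier (G n) \<Longrightarrow> f <#\<^bsub>G n\<^esub> S n (n - m) \<in> UHom G T m n"
  unfolding UHom_iff by blast

lemma UHom_eq_l_coset:
  assumes "\<psi> \<in> UHom G T m n" "f \<in> \<psi>"
  shows "m \<le> n" "f \<in> carrier (G n)" "\<psi> = f <#\<^bsub>G n\<^esub> S n (n - m)"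
proof -
  obtain f0 where f0: "m \<le> n" "f0 \<in> carrier (G n)" "\<psi> = f0 <#\<^bsub>G n\<^esub> S n (n - m)"
    using assms(1) unfolding UHom_iff by blast
  interpret group "G n" by (rule group_G)
  have H: "subgroup (S n (n - m)) (G n)" by (simp add: subgroup_stab_sub)
  show "m \<le> n" by (fact f0(1))
  show "f \<in> carrier (G n)" using l_coset_carrier[OF _ f0(2) H] assms(2) f0(3) by blast
  show "\<psi> = f <#\<^bsub>G n\<^esub> S n (n - m)" using l_repr_independence[OF _ f0(2) H] assms(2) f0(3) by blast
qed

lemma urep_in_UHom: "\<psi> \<in> UHom G T m n \<Longrightarrow> urep \<psi> \<in> \<psi>"
  unfolding UHom_iff
  by (auto intro: group.urep_l_coset[OF group_G subgroup_stab_sub])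

lemma ucomp_l_coset:
  assumes "k \<le> n" "m \<le> k" "f \<in> carrier (G n)" "g \<in> carrier (G k)"
  shows "ucomp G T n k m (f <#\<^bsub>G n\<^esub> S n (n - k)) (g <#\<^bsub>G k\<^esub> S k (k - m))
    = (f \<otimes>\<^bsub>G n\<^esub> embR n k g) <#\<^bsub>G n\<^esub> S n (n - m)"
proof -
  interpret Gn: group "G n" by (rule group_G)
  obtain s where s: "s \<in> carrier (G (n - k))" "urep (f <#\<^bsub>G n\<^esub> S n (n - k)) = f \<otimes>\<^bsub>G n\<^esub> embL n (n - k) s"
    using urep_l_coset_stab_sub[OF diff_le_self assms(3)] by blast
  obtain s' where s': "s' \<in> carrier (G (k - m))" "urep (g <#\<^bsub>G k\<^esub> S k (k - m)) = g \<otimes>\<^bsub>G k\<^esub> embL k (k - m) s'"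
    using urep_l_coset_stab_sub[OF diff_le_self assms(4)] by blast
  define a where "a = embL n (n - k) s"
  define b where "b = embR n k (embL k (k - m) s')"
  have a: "a \<in> S n (n - m)"
    using stab_sub_mono[OF diff_le_mono2[OF assms(2)] diff_le_self] embL_in_stab_sub[OF s(1)]
    unfolding a_def by blast
  have b: "b \<in> S n (n - m)"
    using embR_stab_sub[OF diff_le_self assms(1) embL_in_stab_sub[OF s'(1)]] assms unfolding b_def by simp
  have H: "subgroup (S n (n - m)) (G n)" by (simp add: subgroup_stab_sub)
  have carr: "a \<in> carrier (G n)" "b \<in> carrier (G n)" "embR n k g \<in> carrier (G n)"
    using stab_sub_closed[OF diff_le_self a] stab_sub_closed[OF diff_le_self b] embR_closed[OF assms(1,4)]
    by auto
  have comm: "a \<otimes>\<^bsub>G n\<^esub> embR n k g = embR n k g \<otimes>\<^bsub>G n\<^esub> a"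
    unfolding a_def using embR_embL_commute[of k "n - k" n g s] assms s(1) by simp
  have "embR n k (urep (g <#\<^bsub>G k\<^esub> S k (k - m))) = embR n k g \<otimes>\<^bsub>G n\<^esub> b"
    unfolding s'(2) b_def using assms s'(1) by (simp add: embR_mult embL_closed)
  then have "urep (f <#\<^bsub>G n\<^esub> S n (n - k)) \<otimes>\<^bsub>G n\<^esub> embR n k (urep (g <#\<^bsub>G k\<^esub> S k (k - m)))
      = f \<otimes>\<^bsub>G n\<^esub> (a \<otimes>\<^bsub>G n\<^esub> embR n k g) \<otimes>\<^bsub>G n\<^esub> b"
    unfolding s(2) a_def[symmetric] using carr assms(3) by (simp add: Gn.m_assoc)
  also have "\<dots> = (f \<otimes>\<^bsub>G n\<^esub> embR n k g) \<otimes>\<^bsub>G n\<^esub> (a \<otimes>\<^bsub>G n\<^esub> b)"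
    unfolding comm using carr assms(3) by (simp add: Gn.m_assoc)
  finally show ?thesis unfolding ucomp_def embR_def[symmetric]
    using Gn.l_coset_mult_absorb[OF H _ subgroup.m_closed[OF H a b]] carr assms(3) by simp
qed

lemma uid_eq: "uid G T n = {e n}"
  unfolding uid_def by (rule l_coset_stab_sub_zero[OF one_closed])

lemma urep_uid: "urep (uid G T n) = e n"
  unfolding uid_eq urep_def by simp

lemma embR_inv_B:
  assumes "s \<in> carrier (G r)"
  shows "embR (A + r) r s \<otimes>\<^bsub>G (A + r)\<^esub> inv\<^bsub>G (A + r)\<^esub> B A r = inv\<^bsub>G (A + r)\<^esub> B A r \<otimes>\<^bsub>G (A + r)\<^esub> embL (A + r) r s"
proof -
  have "B A r \<otimes>\<^bsub>G (A + r)\<^esub> embR (A + r) r s = embL (A + r) r s \<otimes>\<^bsub>G (A + r)\<^esub> B A r"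
    using B_natural[of "e A" A s r] assms by (simp add: embR_def embL_def one_closed)
  then show ?thesis
    using assms by (intro group.inv_intertwines[OF group_G]) (auto intro: B_closed embL_closed embR_closed)
qed

lemma embL_inv_B:
  assumes "s \<in> carrier (G N)"
  shows "embL (N + r) N s \<otimes>\<^bsub>G (N + r)\<^esub> inv\<^bsub>G (N + r)\<^esub> B N r = inv\<^bsub>G (N + r)\<^esub> B N r \<otimes>\<^bsub>G (N + r)\<^esub> embR (N + r) N s"
proof -
  have "B N r \<otimes>\<^bsub>G (N + r)\<^esub> embL (N + r) N s = embR (N + r) N s \<otimes>\<^bsub>G (N + r)\<^esub> B N r"
    using B_natural[of s N "e r" r] assms by (simp add: embR_def embL_def one_closed)
  then show ?thesis
    using assms by (intro group.inv_intertwines[OF group_G]) (auto intro: B_closed embL_closed embR_closed)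
qed

lemma inv_B_hexagon:
  "inv\<^bsub>G (M + A + r)\<^esub> B (M + A) r =
   embR (M + A + r) (A + r) (inv\<^bsub>G (A + r)\<^esub> B A r) \<otimes>\<^bsub>G (M + A + r)\<^esub> embL (M + A + r) (M + r) (inv\<^bsub>G (M + r)\<^esub> B M r)"
proof -
  interpret group "G (M + A + r)" by (rule group_G)
  have "B (M + A) r = embL (M + A + r) (M + r) (B M r) \<otimes>\<^bsub>G (M + A + r)\<^esub> embR (M + A + r) (A + r) (B A r)"
    using B_hexagon_right[of M A r] by (simp add: embL_def embR_def)
  then show ?thesis
    using B_closed[of M r] B_closed[of A r]
    by (simp add: inv_mult_group embL_closed embR_closed embL_inv embR_inv)
qed

definition uincl :: "nat \<Rightarrow> nat \<Rightarrow> 'g set" where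
  "uincl A N = e N <#\<^bsub>G N\<^esub> S N (N - A)"

lemma uincl_in_UHom: "A \<le> N \<Longrightarrow> uincl A N \<in> UHom G T A N"
  unfolding uincl_def by (rule l_coset_in_UHom[OF _ one_closed])

lemma T_eq_embL: "k \<le> n \<Longrightarrow> T k (n - k) t (e (n - k)) = embL n k t"
  by (simp add: embL_def)

lemma utens_l_coset_uid:
  assumes "A \<le> A'" "a \<in> carrier (G A')"
  shows "utens G T B A A' X X (a <#\<^bsub>G A'\<^esub> S A' (A' - A)) (uid G T X) = embL (A' + X) A' a <#\<^bsub>G (A' + X)\<^esub> S (A' + X) (A' - A)"
proof -
  interpret G': group "G (A' + X)" by (rule group_G)
  obtain s where s: "s \<in> carrier (G (A' - A))" "urep (a <#\<^bsub>G A'\<^esub> S A' (A' - A)) = a \<otimes>\<^bsub>G A'\<^esub> embL A' (A' - A) s"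
    using urep_l_coset_stab_sub[OF diff_le_self assms(2)] by blast
  have no_braid: "T (A' - A) (A + X) (e (A' - A)) (T A X (inv\<^bsub>G A\<^esub> B A 0) (e X)) = e (A' + X)"
    using assms(1) by (simp add: B_right_zero monoid.inv_one[OF group.is_monoid[OF group_G]] T_one_one)
  have "T A' X (a \<otimes>\<^bsub>G A'\<^esub> embL A' (A' - A) s) (e X) = embL (A' + X) A' a \<otimes>\<^bsub>G (A' + X)\<^esub> embL (A' + X) (A' - A) s"
    using T_eq_embL[of A' "A' + X"] assms s(1)
    by (simp add: embL_mult embL_closed embL_embL)
  then show ?thesis
    unfolding utens_def Let_def s(2) urep_uid using no_braid assms s(1)
    by (simp add: embL_closed l_coset_embL_absorb)
qed

lemma utens_uid_l_coset:
  assumes "q \<le> p" "h \<in> carrier (G p)"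
  shows "utens G T B A A q p (uid G T A) (h <#\<^bsub>G p\<^esub> S p (p - q)) =
    (embR (A + p) p h \<otimes>\<^bsub>G (A + p)\<^esub> embL (A + p) (A + (p - q)) (inv\<^bsub>G (A + (p - q))\<^esub> B A (p - q)))
      <#\<^bsub>G (A + p)\<^esub> S (A + p) (p - q)"
proof -
  interpret GAp: group "G (A + p)" by (rule group_G)
  obtain s where s: "s \<in> carrier (G (p - q))" "urep (h <#\<^bsub>G p\<^esub> S p (p - q)) = h \<otimes>\<^bsub>G p\<^esub> embL p (p - q) s"
    using urep_l_coset_stab_sub[OF diff_le_self assms(2)] by blast
  define ib where "ib = inv\<^bsub>G (A + (p - q))\<^esub> B A (p - q)"
  define c where "c = embL (A + p) (A + (p - q)) ib"
  have ib: "ib \<in> carrier (G (A + (p - q)))" unfolding ib_def by (rule inv_B_closed[OF refl])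
  have sums: "A + (p - q) \<le> A + p" "A + p - p + (p - q) = A + (p - q)" "A + (p - q) + q = A + p"
    using assms(1) by auto
  have carr: "c \<in> carrier (G (A + p))" "embR (A + p) p h \<in> carrier (G (A + p))"
    "embL (A + p) (A + (p - q)) (embR (A + (p - q)) (p - q) s) \<in> carrier (G (A + p))"
    unfolding c_def using ib assms s(1) sums by (simp_all add: embL_closed embR_closed)
  have 1: "utens G T B A A q p (uid G T A) (h <#\<^bsub>G p\<^esub> S p (p - q)) =
      (embR (A + p) p (h \<otimes>\<^bsub>G p\<^esub> embL p (p - q) s) \<otimes>\<^bsub>G (A + p)\<^esub> c) <#\<^bsub>G (A + p)\<^esub> S (A + p) (p - q)"
    unfolding utens_def Let_def urep_uid s(2) ib_def[symmetric] c_def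
    using T_unit_left[OF embL_closed[OF sums(1) ib]] T_eq_embL[of "A + (p - q)" "A + p" ib] sums
    by (simp add: embR_def)
  have "embR (A + p) p (embL p (p - q) s) \<otimes>\<^bsub>G (A + p)\<^esub> c
      = embL (A + p) (A + (p - q)) (embR (A + (p - q)) (p - q) s \<otimes>\<^bsub>G (A + (p - q))\<^esub> ib)"
    unfolding c_def using embR_embL[of "p - q" p "A + p" s] s(1) ib sums
    by (simp add: embL_mult embR_closed)
  also have "\<dots> = c \<otimes>\<^bsub>G (A + p)\<^esub> embL (A + p) (p - q) s"
    unfolding ib_def embR_inv_B[OF s(1)] c_def[unfolded ib_def]
    using s(1) sums B_closed[of A "p - q"]
    by (simp add: embL_mult embL_closed embL_embL group.inv_closed[OF group_G])
  finally have swap: "embR (A + p) p (embL p (p - q) s) \<otimes>\<^bsub>G (A + p)\<^esub> c = c \<otimes>\<^bsub>G (A + p)\<^esub> embL (A + p) (p - q) s" .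
  have "embR (A + p) p (h \<otimes>\<^bsub>G p\<^esub> embL p (p - q) s) \<otimes>\<^bsub>G (A + p)\<^esub> c
      = embR (A + p) p h \<otimes>\<^bsub>G (A + p)\<^esub> (embR (A + p) p (embL p (p - q) s) \<otimes>\<^bsub>G (A + p)\<^esub> c)"
    using assms s(1) carr by (simp add: embR_mult embR_closed embL_closed GAp.m_assoc)
  also have "\<dots> = (embR (A + p) p h \<otimes>\<^bsub>G (A + p)\<^esub> c) \<otimes>\<^bsub>G (A + p)\<^esub> embL (A + p) (p - q) s"
    unfolding swap using assms s(1) carr by (simp add: embL_closed GAp.m_assoc)
  finally have "embR (A + p) p (h \<otimes>\<^bsub>G p\<^esub> embL p (p - q) s) \<otimes>\<^bsub>G (A + p)\<^esub> c
      = (embR (A + p) p h \<otimes>\<^bsub>G (A + p)\<^esub> c) \<otimes>\<^bsub>G (A + p)\<^esub> embL (A + p) (p - q) s" .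
  then show ?thesis unfolding 1 using carr s(1) by (simp add: l_coset_embL_absorb c_def ib_def)
qed

lemma utens_uid_uiota:
  "utens G T B N N 0 r (uid G T N) (uiota G T r) = inv\<^bsub>G (N + r)\<^esub> B N r <#\<^bsub>G (N + r)\<^esub> S (N + r) r"
proof -
  have "uiota G T r \<in> UHom G T 0 r"
    unfolding uiota_def using l_coset_in_UHom[of 0 r "e r"] by (simp add: one_closed)
  then have u: "urep (uiota G T r) \<in> carrier (G r)"
    using UHom_eq_l_coset(2) urep_in_UHom by blast
  have ib: "inv\<^bsub>G (N + r)\<^esub> B N r \<in> carrier (G (N + r))" by (rule inv_B_closed[OF refl])
  have "utens G T B N N 0 r (uid G T N) (uiota G T r) =
      (embR (N + r) r (urep (uiota G T r)) \<otimes>\<^bsub>G (N + r)\<^esub> inv\<^bsub>G (N + r)\<^esub> B N r) <#\<^bsub>G (N + r)\<^esub> S (N + r) r"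
    unfolding utens_def Let_def urep_uid using ib by (simp add: embR_def T_unit_left T_unit_right)
  also have "\<dots> = inv\<^bsub>G (N + r)\<^esub> B N r <#\<^bsub>G (N + r)\<^esub> S (N + r) r"
    unfolding embR_inv_B[OF u] using ib u by (simp add: l_coset_embL_absorb)
  finally show ?thesis .
qed

lemma utens_uid_uiota_diff:
  assumes "q \<le> p" "p \<le> n"
  shows "utens G T B (n - p) (n - p) 0 (p - q) (uid G T (n - p)) (uiota G T (p - q))
    = inv\<^bsub>G (n - q)\<^esub> B (n - p) (p - q) <#\<^bsub>G (n - q)\<^esub> S (n - q) (n - q - (n - p))"
proof -
  have "n - p + (p - q) = n - q" "n - q - (n - p) = p - q" using assms by auto
  then show ?thesis using utens_uid_uiota[of "n - p" "p - q"] by simp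
qed

lemma utens_uid_uiota_in_UHom:
  assumes "q \<le> p" "p \<le> n"
  shows "utens G T B (n - p) (n - p) 0 (p - q) (uid G T (n - p)) (uiota G T (p - q)) \<in> UHom G T (n - p) (n - q)"
proof -
  have "n - p + (p - q) = n - q" using assms by auto
  then have "inv\<^bsub>G (n - q)\<^esub> B (n - p) (p - q) \<in> carrier (G (n - q))" by (rule inv_B_closed)
  moreover have "n - p \<le> n - q" using assms by simp
  ultimately show ?thesis
    unfolding utens_uid_uiota_diff[OF assms] by (rule l_coset_in_UHom[rotated])
qed

lemma ucomp_utens_uid_l_coset:
  assumes "A + p \<le> n" "q \<le> p" "f \<in> carrier (G n)" "h \<in> carrier (G p)"
  shows "ucomp G T n (A + p) (A + q) (f <#\<^bsub>G n\<^esub> S n (n - (A + p)))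
      (utens G T B A A q p (uid G T A) (h <#\<^bsub>G p\<^esub> S p (p - q)))
    = (f \<otimes>\<^bsub>G n\<^esub> embR n p h \<otimes>\<^bsub>G n\<^esub> embL n (n - q) (embR (n - q) (A + (p - q)) (inv\<^bsub>G (A + (p - q))\<^esub> B A (p - q))))
        <#\<^bsub>G n\<^esub> S n (n - (A + q))"
proof -
  interpret Gn: group "G n" by (rule group_G)
  define ib where "ib = inv\<^bsub>G (A + (p - q))\<^esub> B A (p - q)"
  have ib: "ib \<in> carrier (G (A + (p - q)))" unfolding ib_def by (rule inv_B_closed[OF refl])
  have idx: "A + (p - q) \<le> A + p" "p \<le> A + p" "n - (A + p) + (A + (p - q)) = n - q" "A + p - (A + q) = p - q"
    using assms(1,2) by auto
  have Z: "embR (A + p) p h \<otimes>\<^bsub>G (A + p)\<^esub> embL (A + p) (A + (p - q)) ib \<in> carrier (G (A + p))"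
    using embR_closed[OF idx(2) assms(4)] embL_closed[OF idx(1) ib] by (simp add: group.is_monoid[OF group_G] monoid.m_closed)
  have "embR n (A + p) (embR (A + p) p h \<otimes>\<^bsub>G (A + p)\<^esub> embL (A + p) (A + (p - q)) ib)
      = embR n p h \<otimes>\<^bsub>G n\<^esub> embL n (n - q) (embR (n - q) (A + (p - q)) ib)"
    using embR_mult[OF assms(1) embR_closed[OF idx(2) assms(4)] embL_closed[OF idx(1) ib]]
      embR_embR[OF idx(2) assms(1,4)] embR_embL[OF idx(1) assms(1) ib] idx(3) by simp
  then show ?thesis
    unfolding utens_uid_l_coset[OF assms(2,4)] ib_def[symmetric]
    using ucomp_l_coset[OF assms(1) _ assms(3) Z, of "A + q"] idx(4) assms
      embR_closed[OF _ assms(4)] embL_closed[OF _ embR_closed[OF _ ib]]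
    by (simp add: Gn.m_assoc)
qed

end

locale braided_stability_functor = braided_stability G T B
  for G :: "nat \<Rightarrow> 'g monoid" and T B +
  fixes Fo :: "nat \<Rightarrow> 'x set" and Fm :: "nat \<Rightarrow> nat \<Rightarrow> 'g set \<Rightarrow> 'x \<Rightarrow> 'x"
  assumes UG_functor: "UG_functor G T Fo Fm"
begin

lemma F_closed: "\<phi> \<in> UHom G T m n \<Longrightarrow> x \<in> Fo m \<Longrightarrow> Fm m n \<phi> x \<in> Fo n"
  using UG_functor unfolding UG_functor_def by blast

lemma F_id: "x \<in> Fo n \<Longrightarrow> Fm n n (uid G T n) x = x"
  using UG_functor unfolding UG_functor_def by blast

lemma F_comp:
  "\<phi> \<in> UHom G T m k \<Longrightarrow> \<psi> \<in> UHom G T k n \<Longrightarrow> x \<in> Fo m \<Longrightarrow>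
   Fm m n (ucomp G T n k m \<psi> \<phi>) x = Fm k n \<psi> (Fm m k \<phi> x)"
  using UG_functor unfolding UG_functor_def by blast

lemma F_comp_l_coset:
  assumes "k \<le> n" "m \<le> k" "f \<in> carrier (G n)" "g \<in> carrier (G k)" "x \<in> Fo m"
  shows "Fm k n (f <#\<^bsub>G n\<^esub> S n (n - k)) (Fm m k (g <#\<^bsub>G k\<^esub> S k (k - m)) x)
    = Fm m n ((f \<otimes>\<^bsub>G n\<^esub> embR n k g) <#\<^bsub>G n\<^esub> S n (n - m)) x"
  using F_comp[OF l_coset_in_UHom[OF assms(2,4)] l_coset_in_UHom[OF assms(1,3)] assms(5)]
    ucomp_l_coset[OF assms(1-4)] by simp

lemma F_act_l_coset:
  assumes "A \<le> N" "k \<in> carrier (G N)" "g \<in> carrier (G N)" "x \<in> Fo A"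
  shows "Fm N N (k <#\<^bsub>G N\<^esub> S N 0) (Fm A N (g <#\<^bsub>G N\<^esub> S N (N - A)) x) = Fm A N ((k \<otimes>\<^bsub>G N\<^esub> g) <#\<^bsub>G N\<^esub> S N (N - A)) x"
  using F_comp_l_coset[of N N A k g x] assms by (simp add: embR_self)

lemma F_uincl_closed: "A \<le> N \<Longrightarrow> x \<in> Fo A \<Longrightarrow> Fm A N (uincl A N) x \<in> Fo N"
  by (rule F_closed[OF uincl_in_UHom])

lemma F_uincl_self: "x \<in> Fo N \<Longrightarrow> Fm N N (uincl N N) x = x"
  using F_id unfolding uincl_def uid_def by simp

lemma F_act_uincl:
  assumes "A \<le> N" "k \<in> carrier (G N)" "x \<in> Fo A"
  shows "Fm N N (k <#\<^bsub>G N\<^esub> S N 0) (Fm A N (uincl A N) x) = Fm A N (k <#\<^bsub>G N\<^esub> S N (N - A)) x"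
  unfolding uincl_def using F_act_l_coset[OF assms(1,2) one_closed assms(3)] assms(2)
  by (simp add: group.is_monoid[OF group_G] monoid.r_one)

lemma F_stab_act_uincl:
  assumes "A \<le> N" "s \<in> carrier (G (N - A))" "x \<in> Fo A"
  shows "Fm N N (embL N (N - A) s <#\<^bsub>G N\<^esub> S N 0) (Fm A N (uincl A N) x) = Fm A N (uincl A N) x"
proof -
  have "embL N (N - A) s <#\<^bsub>G N\<^esub> S N (N - A) = uincl A N"
    using l_coset_embL_absorb[OF diff_le_self one_closed assms(2)] embL_closed[OF diff_le_self assms(2)]
    unfolding uincl_def by (simp add: group.is_monoid[OF group_G] monoid.l_one)
  then show ?thesis using F_act_uincl[OF assms(1) embL_closed[OF diff_le_self assms(2)] assms(3)] by simp
qed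

lemma equiv_bal_eq: "equiv UNIV (bal_eq G T Fo Fm n k)"
  unfolding bal_eq_def by (rule equiv_rtrancl_symcl)

lemma equiv_Sig_eq: "equiv UNIV (Sig_eq G T B Fo Fm p n)"
  unfolding Sig_eq_def by (rule equiv_rtrancl_symcl)

lemma bcls_embL:
  assumes "g \<in> carrier (G n)" "x \<in> Fo k" "h \<in> carrier (G k)"
  shows "bcls G T Fo Fm n k (g \<otimes>\<^bsub>G n\<^esub> embL n k h) x = bcls G T Fo Fm n k g (Fm k k (h <#\<^bsub>G k\<^esub> S k 0) x)"
proof -
  have "((g \<otimes>\<^bsub>G n\<^esub> embL n k h, x), (g, Fm k k (h <#\<^bsub>G k\<^esub> S k 0) x)) \<in> bal_rel G T Fo Fm n k"
    unfolding bal_rel_def embL_def using assms by blast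
  then have "((g \<otimes>\<^bsub>G n\<^esub> embL n k h, x), (g, Fm k k (h <#\<^bsub>G k\<^esub> S k 0) x)) \<in> bal_eq G T Fo Fm n k"
    by (simp add: bal_eq_def r_into_rtrancl)
  then show ?thesis unfolding bcls_def by (rule equiv_class_eq[OF equiv_bal_eq])
qed

definition to_bal :: "nat \<Rightarrow> nat \<Rightarrow> nat \<times> 'g set \<times> 'x \<Rightarrow> ('g \<times> 'x) set" where
  "to_bal p n = (\<lambda>(A, \<psi>, x). bcls G T Fo Fm n (n - p) (urep \<psi>) (Fm A (n - p) (uincl A (n - p)) x))"

definition sig_rep :: "nat \<Rightarrow> nat \<Rightarrow> 'g \<times> 'x \<Rightarrow> nat \<times> 'g set \<times> 'x" where
  "sig_rep p n = (\<lambda>(g, x). (n - p, g <#\<^bsub>G n\<^esub> S n 0, x))"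

lemma to_bal_rep:
  assumes "(A, \<psi>, x) \<in> Sig_tot G T Fo p n" "f \<in> \<psi>"
  shows "to_bal p n (A, \<psi>, x) = bcls G T Fo Fm n (n - p) f (Fm A (n - p) (uincl A (n - p)) x)"
proof -
  have \<psi>: "\<psi> \<in> UHom G T (A + p) n" and x: "x \<in> Fo A" using assms(1) by (simp_all add: Sig_tot_def)
  note \<psi>f = UHom_eq_l_coset[OF \<psi> assms(2)]
  have idx: "n - (A + p) = n - p - A" "n - p - A \<le> n - p" "A \<le> n - p" "n - p - A \<le> n"
    using \<psi>f(1) by auto
  have \<psi>_eq: "\<psi> = f <#\<^bsub>G n\<^esub> S n (n - p - A)" using \<psi>f(3) unfolding idx(1) .
  obtain s where s: "s \<in> carrier (G (n - p - A))" "urep \<psi> = f \<otimes>\<^bsub>G n\<^esub> embL n (n - p - A) s"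
    using urep_l_coset_stab_sub[OF idx(4) \<psi>f(2)] unfolding \<psi>_eq[symmetric] by blast
  have "embL n (n - p - A) s = embL n (n - p) (embL (n - p) (n - p - A) s)"
    using embL_embL[OF idx(2) diff_le_self s(1)] by simp
  then have "to_bal p n (A, \<psi>, x) = bcls G T Fo Fm n (n - p) f
      (Fm (n - p) (n - p) (embL (n - p) (n - p - A) s <#\<^bsub>G (n - p)\<^esub> S (n - p) 0) (Fm A (n - p) (uincl A (n - p)) x))"
    unfolding to_bal_def using bcls_embL[OF \<psi>f(2) F_uincl_closed[OF idx(3) x] embL_closed[OF idx(2) s(1)]] s(2)
    by simp
  then show ?thesis using F_stab_act_uincl[OF idx(3) s(1) x] by simp
qed

lemma to_bal_sig_rep:
  assumes "p \<le> n" "g \<in> carrier (G n)" "x \<in> Fo (n - p)"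
  shows "to_bal p n (sig_rep p n (g, x)) = bcls G T Fo Fm n (n - p) g x"
  unfolding sig_rep_def to_bal_def
  using F_uincl_self[OF assms(3)] by (simp add: urep_def l_coset_stab_sub_zero[OF assms(2)])

lemma sig_rep_in_Sig_tot:
  assumes "p \<le> n" "g \<in> carrier (G n)" "x \<in> Fo (n - p)"
  shows "sig_rep p n (g, x) \<in> Sig_tot G T Fo p n"
  using l_coset_in_UHom[of n n g] assms unfolding sig_rep_def Sig_tot_def by simp

lemma to_bal_Sig_rel:
  assumes "((A, \<psi>, x), (A', \<psi>', x')) \<in> Sig_rel G T B Fo Fm p n"
  shows "to_bal p n (A, \<psi>, x) = to_bal p n (A', \<psi>', x')"
proof -
  have t: "(A, \<psi>, x) \<in> Sig_tot G T Fo p n" and t': "(A', \<psi>', x') \<in> Sig_tot G T Fo p n"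
    and "\<exists>\<alpha> \<in> UHom G T A A'. \<psi> = ucomp G T n (A' + p) (A + p) \<psi>' (utens G T B A A' p p \<alpha> (uid G T p))
      \<and> x' = Fm A A' \<alpha> x"
    using assms unfolding Sig_rel_def by auto
  then obtain \<alpha> where \<alpha>: "\<alpha> \<in> UHom G T A A'"
    and \<psi>: "\<psi> = ucomp G T n (A' + p) (A + p) \<psi>' (utens G T B A A' p p \<alpha> (uid G T p))"
    and x': "x' = Fm A A' \<alpha> x" by blast
  have x: "x \<in> Fo A" and \<psi>': "\<psi>' \<in> UHom G T (A' + p) n" using t t' by (simp_all add: Sig_tot_def)
  define f where "f = urep \<psi>'"
  define a where "a = urep \<alpha>"
  note f = UHom_eq_l_coset[OF \<psi>' urep_in_UHom[OF \<psi>', folded f_def]]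
  note a = UHom_eq_l_coset[OF \<alpha> urep_in_UHom[OF \<alpha>, folded a_def]]
  define k where "k = embR (n - p) A' a"
  have idx: "A' \<le> n - p" "n - (A' + p) + A' = n - p" "A \<le> n - p" "A' + p - (A + p) = A' - A"
    "n - p - A' + A' = n - p"
    using f(1) a(1) by auto
  have k: "k \<in> carrier (G (n - p))" unfolding k_def using embR_closed[OF idx(1) a(2)] .
  have "\<psi> = (f \<otimes>\<^bsub>G n\<^esub> embR n (A' + p) (embL (A' + p) A' a)) <#\<^bsub>G n\<^esub> S n (n - (A + p))"
    unfolding \<psi> a(3) utens_l_coset_uid[OF a(1,2)] f(3)
    using ucomp_l_coset[OF f(1) _ f(2) embL_closed[OF _ a(2)], of "A + p"] a(1) idx(4) by simp
  also have "embR n (A' + p) (embL (A' + p) A' a) = embL n (n - p) k"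
    unfolding k_def using embR_embL[of A' "A' + p" n a] f(1) a(2) idx(2) by simp
  finally have "f \<otimes>\<^bsub>G n\<^esub> embL n (n - p) k \<in> \<psi>"
    using group.lcos_self[OF group_G _ subgroup_stab_sub] f(2) embL_closed[OF _ k]
    by (metis diff_le_self group.is_monoid[OF group_G] monoid.m_closed)
  then have "to_bal p n (A, \<psi>, x) = bcls G T Fo Fm n (n - p) f (Fm A (n - p) (k <#\<^bsub>G (n - p)\<^esub> S (n - p) (n - p - A)) x)"
    using to_bal_rep[OF t] bcls_embL[OF f(2) F_uincl_closed[OF idx(3) x] k] F_act_uincl[OF idx(3) k x]
    by simp
  also have "Fm A (n - p) (k <#\<^bsub>G (n - p)\<^esub> S (n - p) (n - p - A)) x = Fm A' (n - p) (uincl A' (n - p)) x'"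
    unfolding x' a(3) uincl_def k_def
    using F_comp_l_coset[OF idx(1) a(1) one_closed a(2) x] embR_closed[OF idx(1) a(2)]
    by (simp add: group.is_monoid[OF group_G] monoid.l_one)
  finally show ?thesis using to_bal_rep[OF t' urep_in_UHom[OF \<psi>', folded f_def]] by simp
qed

lemma Sig_rel_sig_rep:
  assumes "(A, \<psi>, x) \<in> Sig_tot G T Fo p n" "f \<in> \<psi>"
  shows "((A, \<psi>, x), sig_rep p n (f, Fm A (n - p) (uincl A (n - p)) x)) \<in> Sig_rel G T B Fo Fm p n"
proof -
  have \<psi>: "\<psi> \<in> UHom G T (A + p) n" and x: "x \<in> Fo A" using assms(1) by (simp_all add: Sig_tot_def)
  note f = UHom_eq_l_coset[OF \<psi> assms(2)]
  have idx: "A \<le> n - p" "p \<le> n" "n - p + p = n" "n - p - A = n - (A + p)" using f(1) by auto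
  have "utens G T B A (n - p) p p (uincl A (n - p)) (uid G T p)
      = embL (n - p + p) (n - p) (e (n - p)) <#\<^bsub>G (n - p + p)\<^esub> S (n - p + p) (n - p - A)"
    unfolding uincl_def by (rule utens_l_coset_uid[OF idx(1) one_closed])
  also have "\<dots> = e n <#\<^bsub>G n\<^esub> S n (n - (A + p))"
    unfolding idx(3,4) using idx(2) by (simp add: embL_one)
  finally have "utens G T B A (n - p) p p (uincl A (n - p)) (uid G T p) = e n <#\<^bsub>G n\<^esub> S n (n - (A + p))" .
  then have "\<psi> = ucomp G T n (n - p + p) (A + p) (f <#\<^bsub>G n\<^esub> S n 0) (utens G T B A (n - p) p p (uincl A (n - p)) (uid G T p))"
    using ucomp_l_coset[of n n "A + p" f "e n"] f one_closed
    by (simp add: idx(3) embR_self group.is_monoid[OF group_G] monoid.r_one)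
  then show ?thesis
    using assms(1) sig_rep_in_Sig_tot[OF idx(2) f(2) F_uincl_closed[OF idx(1) x]] uincl_in_UHom[OF idx(1)]
    unfolding Sig_rel_def sig_rep_def by auto
qed

lemma bal_rel_sig_rep:
  assumes "(y, y') \<in> bal_rel G T Fo Fm n (n - p)" "p \<le> n"
  shows "(sig_rep p n y, sig_rep p n y') \<in> Sig_rel G T B Fo Fm p n"
proof -
  obtain g x g' x' where y: "y = (g, x)" "y' = (g', x')" by (cases y, cases y') auto
  obtain h where g': "g' \<in> carrier (G n)" and x: "x \<in> Fo (n - p)" and h: "h \<in> carrier (G (n - p))"
    and g: "g = g' \<otimes>\<^bsub>G n\<^esub> embL n (n - p) h" and x': "x' = Fm (n - p) (n - p) (h <#\<^bsub>G (n - p)\<^esub> S (n - p) 0) x"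
    using assms(1) unfolding y bal_rel_def embL_def by auto
  have idx: "n - p + p = n" "n - p - (n - p) = 0" using assms(2) by auto
  have \<alpha>: "h <#\<^bsub>G (n - p)\<^esub> S (n - p) 0 \<in> UHom G T (n - p) (n - p)"
    using l_coset_in_UHom[OF order_refl h] by simp
  have gc: "g \<in> carrier (G n)" unfolding g using g' embL_closed[OF _ h] assms(2)
    by (simp add: group.is_monoid[OF group_G] monoid.m_closed)
  have "ucomp G T n (n - p + p) (n - p + p) (g' <#\<^bsub>G n\<^esub> S n 0)
      (utens G T B (n - p) (n - p) p p (h <#\<^bsub>G (n - p)\<^esub> S (n - p) 0) (uid G T p)) = g <#\<^bsub>G n\<^esub> S n 0"
    using utens_l_coset_uid[of "n - p" "n - p" h p] ucomp_l_coset[of n n n g' "embL n (n - p) h"] h g'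
      embL_closed[OF _ h] assms(2)
    by (simp add: idx g embR_self)
  then show ?thesis
    using sig_rep_in_Sig_tot[OF assms(2) gc x] sig_rep_in_Sig_tot[OF assms(2) g' F_closed[OF \<alpha> x]] \<alpha>
    unfolding y Sig_rel_def sig_rep_def x' by auto
qed

definition Phi :: "nat \<Rightarrow> nat \<Rightarrow> (nat \<times> 'g set \<times> 'x) set \<Rightarrow> ('g \<times> 'x) set" where
  "Phi p n c = to_bal p n (SOME t. t \<in> c)"

lemma to_bal_respects_Sig_eq: "to_bal p n respects Sig_eq G T B Fo Fm p n"
  unfolding Sig_eq_def by (rule respects_rtrancl_symcl) (metis prod_cases3 to_bal_Sig_rel)

lemma bij_betw_Phi:
  assumes "p \<le> n"
  shows "bij_betw (Phi p n) (Sig G T B Fo Fm p n) (Bal G T Fo Fm n (n - p))"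
  unfolding Phi_def[abs_def] Sig_def Bal_def
proof (rule bij_betw_quotients[OF equiv_Sig_eq equiv_bal_eq to_bal_respects_Sig_eq])
  show "sig_rep p n y \<in> Sig_tot G T Fo p n" if "y \<in> carrier (G n) \<times> Fo (n - p)" for y
    using that sig_rep_in_Sig_tot[OF assms] by auto
  show "(sig_rep p n y, sig_rep p n y') \<in> Sig_eq G T B Fo Fm p n"
    if "(y, y') \<in> bal_eq G T Fo Fm n (n - p)" for y y'
    using that unfolding Sig_eq_def bal_eq_def
    by (rule rtrancl_symcl_map) (rule bal_rel_sig_rep[OF _ assms])
  show "to_bal p n (sig_rep p n y) = bal_eq G T Fo Fm n (n - p) `` {y}"
    if "y \<in> carrier (G n) \<times> Fo (n - p)" for y
    using that to_bal_sig_rep[OF assms] unfolding bcls_def by auto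
  show "\<exists>y\<in>carrier (G n) \<times> Fo (n - p). (t, sig_rep p n y) \<in> Sig_eq G T B Fo Fm p n"
    if "t \<in> Sig_tot G T Fo p n" for t
  proof -
    obtain A \<psi> x where t: "t = (A, \<psi>, x)" by (cases t) auto
    have \<psi>: "\<psi> \<in> UHom G T (A + p) n" and x: "x \<in> Fo A" using that t by (simp_all add: Sig_tot_def)
    note f = UHom_eq_l_coset[OF \<psi> urep_in_UHom[OF \<psi>]]
    have "(t, sig_rep p n (urep \<psi>, Fm A (n - p) (uincl A (n - p)) x)) \<in> Sig_eq G T B Fo Fm p n"
      using Sig_rel_sig_rep[OF that[unfolded t] urep_in_UHom[OF \<psi>]] unfolding t Sig_eq_def by blast
    moreover have "(urep \<psi>, Fm A (n - p) (uincl A (n - p)) x) \<in> carrier (G n) \<times> Fo (n - p)"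
      using f F_uincl_closed[of A "n - p" x] x by auto
    ultimately show ?thesis by blast
  qed
qed

definition bal_map :: "nat \<Rightarrow> nat \<Rightarrow> nat \<Rightarrow> 'g \<Rightarrow> 'g \<times> 'x \<Rightarrow> ('g \<times> 'x) set" where
  "bal_map p q n h = (\<lambda>(g, x). bcls G T Fo Fm n (n - q) (g \<otimes>\<^bsub>G n\<^esub> embR n p h)
     (Fm (n - p) (n - q) (utens G T B (n - p) (n - p) 0 (p - q) (uid G T (n - p)) (uiota G T (p - q))) x))"

lemma F_uiota_act:
  assumes "q \<le> p" "p \<le> n" "s \<in> carrier (G (n - p))" "x \<in> Fo (n - p)"
  shows "Fm (n - q) (n - q) (embL (n - q) (n - p) s <#\<^bsub>G (n - q)\<^esub> S (n - q) 0)
      (Fm (n - p) (n - q) (utens G T B (n - p) (n - p) 0 (p - q) (uid G T (n - p)) (uiota G T (p - q))) x)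
    = Fm (n - p) (n - q) (utens G T B (n - p) (n - p) 0 (p - q) (uid G T (n - p)) (uiota G T (p - q)))
      (Fm (n - p) (n - p) (s <#\<^bsub>G (n - p)\<^esub> S (n - p) 0) x)"
proof -
  define ib where "ib = inv\<^bsub>G (n - q)\<^esub> B (n - p) (p - q)"
  have idx: "n - p + (p - q) = n - q" "n - p \<le> n - q" "n - p - (n - p) = 0" using assms(1,2) by auto
  have ib: "ib \<in> carrier (G (n - q))" unfolding ib_def by (rule inv_B_closed[OF idx(1)])
  have swap: "embL (n - q) (n - p) s \<otimes>\<^bsub>G (n - q)\<^esub> ib = ib \<otimes>\<^bsub>G (n - q)\<^esub> embR (n - q) (n - p) s"
    using embL_inv_B[OF assms(3), of "p - q"] unfolding ib_def idx(1) .
  show ?thesis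
    unfolding utens_uid_uiota_diff[OF assms(1,2)] ib_def[symmetric]
    using F_act_l_coset[OF idx(2) embL_closed[OF idx(2) assms(3)] ib assms(4)]
      F_comp_l_coset[OF idx(2) order_refl ib assms(3) assms(4)] swap idx(3)
    by simp
qed

lemma bal_map_bal_rel:
  assumes "(y, y') \<in> bal_rel G T Fo Fm n (n - p)" "q \<le> p" "p \<le> n" "h \<in> carrier (G p)"
  shows "bal_map p q n h y = bal_map p q n h y'"
proof -
  interpret Gn: group "G n" by (rule group_G)
  obtain g x g' x' where y: "y = (g, x)" "y' = (g', x')" by (cases y, cases y') auto
  obtain s where g': "g' \<in> carrier (G n)" and x: "x \<in> Fo (n - p)" and s: "s \<in> carrier (G (n - p))"
    and g: "g = g' \<otimes>\<^bsub>G n\<^esub> embL n (n - p) s" and x': "x' = Fm (n - p) (n - p) (s <#\<^bsub>G (n - p)\<^esub> S (n - p) 0) x"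
    using assms(1) unfolding y bal_rel_def embL_def by auto
  have idx: "n - p \<le> n - q" "n - q \<le> n" "p + (n - p) \<le> n" using assms(2,3) by auto
  have carr: "embL n (n - p) s \<in> carrier (G n)" "embR n p h \<in> carrier (G n)"
    using embL_closed[OF _ s] embR_closed[OF assms(3,4)] by auto
  have "g \<otimes>\<^bsub>G n\<^esub> embR n p h = g' \<otimes>\<^bsub>G n\<^esub> embR n p h \<otimes>\<^bsub>G n\<^esub> embL n (n - p) s"
    unfolding g using embR_embL_commute[OF idx(3) assms(4) s] g' carr by (simp add: Gn.m_assoc)
  also have "embL n (n - p) s = embL n (n - q) (embL (n - q) (n - p) s)"
    using embL_embL[OF idx(1,2) s] by simp
  finally have "g \<otimes>\<^bsub>G n\<^esub> embR n p h = g' \<otimes>\<^bsub>G n\<^esub> embR n p h \<otimes>\<^bsub>G n\<^esub> embL n (n - q) (embL (n - q) (n - p) s)" .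
  then show ?thesis
    unfolding y bal_map_def x'
    using bcls_embL[OF Gn.m_closed[OF g' carr(2)] F_closed[OF utens_uid_uiota_in_UHom[OF assms(2,3)] x]
        embL_closed[OF idx(1) s]]
      F_uiota_act[OF assms(2,3) s x]
    by simp
qed

lemma bal_map_respects:
  assumes "q \<le> p" "p \<le> n" "h \<in> carrier (G p)"
  shows "bal_map p q n h respects bal_eq G T Fo Fm n (n - p)"
  unfolding bal_eq_def by (rule respects_rtrancl_symcl) (rule bal_map_bal_rel[OF _ assms])

lemma F_uiota_uincl:
  assumes "A + p \<le> n" "q \<le> p" "x \<in> Fo A"
  shows "Fm (n - p) (n - q) (utens G T B (n - p) (n - p) 0 (p - q) (uid G T (n - p)) (uiota G T (p - q)))
      (Fm A (n - p) (uincl A (n - p)) x)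
    = Fm (n - q) (n - q) (embR (n - q) (A + (p - q)) (inv\<^bsub>G (A + (p - q))\<^esub> B A (p - q)) <#\<^bsub>G (n - q)\<^esub> S (n - q) 0)
      (Fm A (n - q) (uincl A (n - q)) x)"
proof -
  define ib where "ib = inv\<^bsub>G (n - q)\<^esub> B (n - p) (p - q)"
  define k where "k = embR (n - q) (A + (p - q)) (inv\<^bsub>G (A + (p - q))\<^esub> B A (p - q))"
  define w where "w = inv\<^bsub>G (n - q - A)\<^esub> B (n - p - A) (p - q)"
  have idx: "n - p - A + A = n - p" "n - p + (p - q) = n - q" "n - p - A + (p - q) = n - q - A"
    "n - p - A + A + (p - q) = n - q" "A + (p - q) \<le> n - q" "n - q - A \<le> n - q" "n - p \<le> n - q" "A \<le> n - p"
    "A \<le> n - q" "n - q - (n - q - A) = A"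
    using assms(1,2) by auto
  have ib: "ib \<in> carrier (G (n - q))" unfolding ib_def by (rule inv_B_closed[OF idx(2)])
  have k: "k \<in> carrier (G (n - q))" unfolding k_def by (rule embR_closed[OF idx(5) inv_B_closed]) simp
  have w: "w \<in> carrier (G (n - q - A))" unfolding w_def by (rule inv_B_closed[OF idx(3)])
  have "ib = k \<otimes>\<^bsub>G (n - q)\<^esub> embL (n - q) (n - q - A) w"
    using inv_B_hexagon[of "n - p - A" A "p - q"] unfolding ib_def k_def w_def idx(1-4) .
  then have coset: "ib <#\<^bsub>G (n - q)\<^esub> S (n - q) (n - q - A) = k <#\<^bsub>G (n - q)\<^esub> S (n - q) (n - q - A)"
    using l_coset_embL_absorb[OF idx(6) k w] by simp
  have p_le: "p \<le> n" using assms(1) by simp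
  have "Fm (n - p) (n - q) (utens G T B (n - p) (n - p) 0 (p - q) (uid G T (n - p)) (uiota G T (p - q)))
      (Fm A (n - p) (uincl A (n - p)) x)
    = Fm A (n - q) ((ib \<otimes>\<^bsub>G (n - q)\<^esub> embR (n - q) (n - p) (e (n - p))) <#\<^bsub>G (n - q)\<^esub> S (n - q) (n - q - A)) x"
    unfolding utens_uid_uiota_diff[OF assms(2) p_le] ib_def[symmetric] uincl_def
    using F_comp_l_coset[OF idx(7,8) ib one_closed assms(3)] by simp
  also have "\<dots> = Fm A (n - q) (k <#\<^bsub>G (n - q)\<^esub> S (n - q) (n - q - A)) x"
    using ib idx(7) coset
    by (simp add: embR_one group.is_monoid[OF group_G] monoid.r_one)
  finally show ?thesis unfolding k_def[symmetric] using F_act_uincl[OF idx(9) k assms(3)] by simp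
qed

lemma some_in_Sig:
  assumes "z \<in> Sig G T B Fo Fm p n"
  shows "(SOME t. t \<in> z) \<in> Sig_tot G T Fo p n" "z = Sig_eq G T B Fo Fm p n `` {SOME t. t \<in> z}"
proof -
  obtain t0 where t0: "t0 \<in> Sig_tot G T Fo p n" "z = Sig_eq G T B Fo Fm p n `` {t0}"
    using assms unfolding Sig_def by (rule quotientE)
  have "t0 \<in> z" unfolding t0(2) by (rule equiv_class_self[OF equiv_Sig_eq UNIV_I])
  then have "(SOME t. t \<in> z) \<in> z" by (rule someI)
  then have rel: "(t0, SOME t. t \<in> z) \<in> Sig_eq G T B Fo Fm p n" using t0(2) by blast
  have "Sig_rel G T B Fo Fm p n \<subseteq> Sig_tot G T Fo p n \<times> Sig_tot G T Fo p n"
    unfolding Sig_rel_def by auto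
  then show "(SOME t. t \<in> z) \<in> Sig_tot G T Fo p n"
    using rtrancl_symcl_closed[OF rel[unfolded Sig_eq_def]] t0(1) by blast
  show "z = Sig_eq G T B Fo Fm p n `` {SOME t. t \<in> z}"
    using t0(2) equiv_class_eq[OF equiv_Sig_eq rel] by simp
qed

lemma Phi_Sig_map_rep:
  assumes "q \<le> p" "h \<in> carrier (G p)" "(A, \<psi>, x) \<in> Sig_tot G T Fo p n"
  shows "Phi q n (Sig_eq G T B Fo Fm q n ``
      {(A, ucomp G T n (A + p) (A + q) \<psi> (utens G T B A A q p (uid G T A) (h <#\<^bsub>G p\<^esub> S p (p - q))), x)})
    = bal_map p q n h (urep \<psi>, Fm A (n - p) (uincl A (n - p)) x)"
proof -
  interpret Gn: group "G n" by (rule group_G)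
  have \<psi>: "\<psi> \<in> UHom G T (A + p) n" and x: "x \<in> Fo A" using assms(3) by (simp_all add: Sig_tot_def)
  define f where "f = urep \<psi>"
  note f = UHom_eq_l_coset[OF \<psi> urep_in_UHom[OF \<psi>, folded f_def]]
  define k where "k = embR (n - q) (A + (p - q)) (inv\<^bsub>G (A + (p - q))\<^esub> B A (p - q))"
  have idx: "A + (p - q) \<le> n - q" "A \<le> n - q" "A + q \<le> n" "p \<le> n" using f(1) assms(1) by auto
  have k: "k \<in> carrier (G (n - q))" unfolding k_def by (rule embR_closed[OF idx(1) inv_B_closed]) simp
  have fh: "f \<otimes>\<^bsub>G n\<^esub> embR n p h \<in> carrier (G n)" using f(2) embR_closed[OF idx(4) assms(2)] by simp
  define f' where "f' = f \<otimes>\<^bsub>G n\<^esub> embR n p h \<otimes>\<^bsub>G n\<^esub> embL n (n - q) k"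
  have f': "f' \<in> carrier (G n)" unfolding f'_def using fh embL_closed[OF _ k] by simp
  have \<psi>2: "ucomp G T n (A + p) (A + q) \<psi> (utens G T B A A q p (uid G T A) (h <#\<^bsub>G p\<^esub> S p (p - q)))
      = f' <#\<^bsub>G n\<^esub> S n (n - (A + q))"
    unfolding f(3) f'_def k_def by (rule ucomp_utens_uid_l_coset[OF f(1) assms(1) f(2) assms(2)])
  have t2: "(A, f' <#\<^bsub>G n\<^esub> S n (n - (A + q)), x) \<in> Sig_tot G T Fo q n"
    unfolding Sig_tot_def using l_coset_in_UHom[OF idx(3) f'] x by simp
  have "f' \<in> f' <#\<^bsub>G n\<^esub> S n (n - (A + q))" by (rule Gn.lcos_self[OF f' subgroup_stab_sub]) simp
  then have "Phi q n (Sig_eq G T B Fo Fm q n `` {(A, f' <#\<^bsub>G n\<^esub> S n (n - (A + q)), x)})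
      = bcls G T Fo Fm n (n - q) f' (Fm A (n - q) (uincl A (n - q)) x)"
    unfolding Phi_def respects_some_in_class[OF equiv_Sig_eq to_bal_respects_Sig_eq] by (rule to_bal_rep[OF t2])
  also have "\<dots> = bcls G T Fo Fm n (n - q) (f \<otimes>\<^bsub>G n\<^esub> embR n p h)
      (Fm (n - q) (n - q) (k <#\<^bsub>G (n - q)\<^esub> S (n - q) 0) (Fm A (n - q) (uincl A (n - q)) x))"
    unfolding f'_def by (rule bcls_embL[OF fh F_uincl_closed[OF idx(2) x] k])
  also have "\<dots> = bal_map p q n h (f, Fm A (n - p) (uincl A (n - p)) x)"
    unfolding bal_map_def k_def using F_uiota_uincl[OF f(1) assms(1) x] by simp
  finally show ?thesis unfolding \<psi>2 f_def .
qed

lemma Phi_Sig_map: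
  assumes "q \<le> p" "p \<le> n" "\<eta> \<in> UHom G T q p" "h \<in> \<eta>" "z \<in> Sig G T B Fo Fm p n"
    and "Phi p n z = bcls G T Fo Fm n (n - p) g x"
  shows "Phi q n (Sig_map G T B Fo Fm q p \<eta> n z) = bal_map p q n h (g, x)"
proof -
  note h = UHom_eq_l_coset[OF assms(3,4)]
  obtain A \<psi> x0 where t: "(SOME t. t \<in> z) = (A, \<psi>, x0)" by (cases "SOME t. t \<in> z") auto
  define y0 where "y0 = (urep \<psi>, Fm A (n - p) (uincl A (n - p)) x0)"
  have "bal_eq G T Fo Fm n (n - p) `` {y0} = bal_eq G T Fo Fm n (n - p) `` {(g, x)}"
    using assms(6) unfolding Phi_def t to_bal_def y0_def bcls_def by simp
  then have "(y0, (g, x)) \<in> bal_eq G T Fo Fm n (n - p)" using eq_equiv_class[OF _ equiv_bal_eq] by blast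
  then have "bal_map p q n h y0 = bal_map p q n h (g, x)"
    by (rule congruentD[OF bal_map_respects[OF assms(1,2) h(2)]])
  moreover have "Sig_map G T B Fo Fm q p \<eta> n z = Sig_eq G T B Fo Fm q n ``
      {(A, ucomp G T n (A + p) (A + q) \<psi> (utens G T B A A q p (uid G T A) \<eta>), x0)}"
    unfolding Sig_map_def t by simp
  ultimately show ?thesis
    using Phi_Sig_map_rep[OF assms(1) h(2) some_in_Sig(1)[OF assms(5), unfolded t]] h(3)
    unfolding y0_def by simp
qed

end

theorem proposition4p2:
  fixes G :: "nat \<Rightarrow> 'g monoid" and T :: "nat \<Rightarrow> nat \<Rightarrow> 'g \<Rightarrow> 'g \<Rightarrow> 'g" and B :: "nat \<Rightarrow> nat \<Rightarrow> 'g"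
    and Fo :: "nat \<Rightarrow> 'x set" and Fm :: "nat \<Rightarrow> nat \<Rightarrow> 'g set \<Rightarrow> 'x \<Rightarrow> 'x"
  assumes "braided_stability_groupoid G T B"
    and "UG_functor G T Fo Fm"
  shows "\<exists>\<Phi> :: nat \<Rightarrow> nat \<Rightarrow> (nat \<times> 'g set \<times> 'x) set \<Rightarrow> ('g \<times> 'x) set.
     (\<forall>p n. p \<le> n \<longrightarrow> bij_betw (\<Phi> p n) (Sig G T B Fo Fm p n) (Bal G T Fo Fm n (n - p))) \<and>
     (\<forall>p q n \<eta> h g x z. q \<le> p \<longrightarrow> p \<le> n \<longrightarrow> \<eta> \<in> UHom G T q p \<longrightarrow> h \<in> \<eta> \<longrightarrow>
        g \<in> carrier (G n) \<longrightarrow> x \<in> Fo (n - p) \<longrightarrow> z \<in> Sig G T B Fo Fm p n \<longrightarrow>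
        \<Phi> p n z = bcls G T Fo Fm n (n - p) g x \<longrightarrow>
        \<Phi> q n (Sig_map G T B Fo Fm q p \<eta> n z) =
          bcls G T Fo Fm n (n - q)
            (mult (G n) g (T (n - p) p (one (G (n - p))) h))
            (Fm (n - p) (n - q) (utens G T B (n - p) (n - p) 0 (p - q) (uid G T (n - p)) (uiota G T (p - q))) x))"
proof -
  interpret braided_stability_functor G T B Fo Fm
    by (intro braided_stability_functor.intro braided_stability_groupoid_imp_braided_stability
        braided_stability_functor_axioms.intro assms)
  show ?thesis
    using bij_betw_Phi Phi_Sig_map unfolding bal_map_def embR_def
    by (intro exI[of _ Phi]) auto
qed

end
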